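(* Let $R$ be a set and let $\mathcal{G}:(\mathbf{1},R)\rightarrow(Y,R)$ be an object of $\mathrm{2Open}_R$ with strategy set $\Sigma_\mathcal{G}$. The mapping $F_\mathcal{G}\mathcal{H}=(Y\rightarrow\mathcal{H})\circ\mathcal{G}$ defines a functor $F_\mathcal{G}:\mathrm{2Open}_R\rightarrow\mathrm{2Open}_R$.
   Context: Fix a set $R$. The objects of $\mathrm{2Open}_R$ are (state-free, coutility-free) open games $\mathcal{G}:(\mathbf{1},R)\rightarrow(Y,R)$, each consisting of a set $\Sigma_\mathcal{G}$ of strategies, a set $Y$ of moves, a play function $P_\mathcal{G}:\Sigma_\mathcal{G}\rightarrow Y$, an equilibrium function $E_\mathcal{G}:(Y\rightarrow R)\rightarrow\mathcal{P}\Sigma_\mathcal{G}$, and the coutility function $C_\mathcal{G}\,\sigma\,r=r$. A morphism $\alpha:\mathcal{G}\rightarrow\mathcal{G}'$ between such games (with data $\Sigma,Y,P,E$ and $\Sigma',Y',P',E'$) is a pair of functions $\alpha_Y:Y\rightarrow Y'$, $\alpha_\Sigma:\Sigma\rightarrow\Sigma'$ such that (i) $\alpha_Y(P\sigma)=P'(\alpha_\Sigma\sigma)$ for all $\sigma\in\Sigma$, and (ii) for all $\sigma\in\Sigma$ and $k:Y'\rightarrow R$, if $\sigma\in E(k\circ\alpha_Y)$ then $\alpha_\Sigma(\sigma)\in E'(k)$; composition is componentwise. For an object $\mathcal{H}$ (data $\Sigma_\mathcal{H},Y_\mathcal{H},P_\mathcal{H},E_\mathcal{H}$), the composite game $F_\mathcal{G}\mathcal{H}=(Y\rightarrow\mathcal{H})\circ\mathcal{G}:(\mathbf{1},R)\rightarrow(Y\times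 Y_\mathcal{H},R)$ (conditioning $\mathcal{H}$ on every move $y\in Y$ and composing sequentially after $\mathcal{G}$) is explicitly: strategies $\Sigma_\mathcal{G}\times(Y\rightarrow\Sigma_\mathcal{H})$; moves $Y\times Y_\mathcal{H}$; play $P(\sigma,f)=(P_\mathcal{G}\sigma,\,P_\mathcal{H}(f(P_\mathcal{G}\sigma)))$; coutility the identity; and for $k:Y\times Y_\mathcal{H}\rightarrow R$, $(\sigma,f)\in E_{F_\mathcal{G}\mathcal{H}}(k)$ iff $\sigma\in E_\mathcal{G}(\lambda y.\,k(y,P_\mathcal{H}(f\,y)))$ and for all $y'\in Y$, $f(y')\in E_\mathcal{H}(\lambda z.\,k(y',z))$. On a morphism $\alpha:\mathcal{H}\rightarrow\mathcal{H}'$, $F_\mathcal{G}(\alpha)$ is given by $(F_\mathcal{G}\alpha)_\Sigma(\sigma,f)=(\sigma,\alpha_\Sigma\circ f)$ and $(F_\mathcal{G}\alpha)_Y(y,z)=(y,\alpha_Y z)$. *)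

theory Defs
  imports Main
begin

(* A state-free, coutility-free open game (1,R) -> (Y,R).
   The strategy set Sigma is the type 's, the move set Y is the type 'y,
   the set R is the type 'r.  Coutility is the identity and is left implicit. *)
record ('s, 'y, 'r) game =
  play :: "'s \<Rightarrow> 'y"
  eqm  :: "('y \<Rightarrow> 'r) \<Rightarrow> 's set"

type_synonym ('y, 's, 'y2, 's2) gmor = "('y \<Rightarrow> 'y2) \<times> ('s \<Rightarrow> 's2)"

definition is_morph ::
  "('s, 'y, 'r) game \<Rightarrow> ('s2, 'y2, 'r) game \<Rightarrow> ('y, 's, 'y2, 's2) gmor \<Rightarrow> bool" where
  "is_morph G G' \<alpha> \<longleftrightarrow>
     (\<forall>\<sigma>. fst \<alpha> (play G \<sigma>) = play G' (snd \<alpha> \<sigma>)) \<and>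
     (\<forall>\<sigma> k. \<sigma> \<in> eqm G (k \<circ> fst \<alpha>) \<longrightarrow> snd \<alpha> \<sigma> \<in> eqm G' k)"

definition id_morph :: "('y, 's, 'y, 's) gmor" where
  "id_morph = (id, id)"

definition comp_morph ::
  "('y2, 's2, 'y3, 's3) gmor \<Rightarrow> ('y, 's, 'y2, 's2) gmor \<Rightarrow> ('y, 's, 'y3, 's3) gmor" where
  "comp_morph \<beta> \<alpha> = (fst \<beta> \<circ> fst \<alpha>, snd \<beta> \<circ> snd \<alpha>)"

definition FG_obj ::
  "('s, 'y, 'r) game \<Rightarrow> ('sh, 'yh, 'r) game \<Rightarrow> ('s \<times> ('y \<Rightarrow> 'sh), 'y \<times> 'yh, 'r) game" where
  "FG_obj G H =
     \<lparr> play = (\<lambda>(\<sigma>, f). (play G \<sigma>, play H (f (play G \<sigma>)))),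
       eqm = (\<lambda>k. {(\<sigma>, f). \<sigma> \<in> eqm G (\<lambda>y. k (y, play H (f y))) \<and>
                         (\<forall>y'. f y' \<in> eqm H (\<lambda>z. k (y', z)))}) \<rparr>"

definition FG_mor ::
  "('s, 'y, 'r) game \<Rightarrow> ('yh, 'sh, 'yh2, 'sh2) gmor \<Rightarrow>
     ('y \<times> 'yh, 's \<times> ('y \<Rightarrow> 'sh), 'y \<times> 'yh2, 's \<times> ('y \<Rightarrow> 'sh2)) gmor" where
  "FG_mor G \<alpha> = ((\<lambda>(y, z). (y, fst \<alpha> z)), (\<lambda>(\<sigma>, f). (\<sigma>, snd \<alpha> \<circ> f)))"

end

theory Submission
  imports Defs
begin

(* The equilibrium condition of F_G H is a conjunction of a condition on the G-strategy and
   independent conditions on each conditioned subgame f y'; a morphism of H transports the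
   latter pointwise, and its play condition makes the G-part see the same payoffs. *)

lemma FG_mor_is_morph:
  assumes "is_morph H H' \<alpha>"
  shows "is_morph (FG_obj G H) (FG_obj G H') (FG_mor G \<alpha>)"
  unfolding is_morph_def
proof (intro conjI allI impI)
  have play_\<alpha>: "\<And>s. fst \<alpha> (play H s) = play H' (snd \<alpha> s)"
    and eqm_\<alpha>: "\<And>s k. s \<in> eqm H (k \<circ> fst \<alpha>) \<Longrightarrow> snd \<alpha> s \<in> eqm H' k"
    using assms by (simp_all add: is_morph_def)
  fix x
  show "fst (FG_mor G \<alpha>) (play (FG_obj G H) x) = play (FG_obj G H') (snd (FG_mor G \<alpha>) x)"
    by (cases x) (simp add: play_\<alpha> FG_obj_def FG_mor_def)
  fix k
  assume "x \<in> eqm (FG_obj G H) (k \<circ> fst (FG_mor G \<alpha>))"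
  moreover obtain \<sigma> f where x: "x = (\<sigma>, f)" by (cases x)
  ultimately have eqm_G: "\<sigma> \<in> eqm G (\<lambda>y. k (y, fst \<alpha> (play H (f y))))"
    and eqm_H: "\<And>y'. f y' \<in> eqm H ((\<lambda>z. k (y', z)) \<circ> fst \<alpha>)"
    by (auto simp: FG_obj_def FG_mor_def comp_def)
  have "\<And>y'. snd \<alpha> (f y') \<in> eqm H' (\<lambda>z. k (y', z))"
    using eqm_H by (rule eqm_\<alpha>)
  with eqm_G x show "snd (FG_mor G \<alpha>) x \<in> eqm (FG_obj G H') k"
    by (simp add: play_\<alpha> FG_obj_def FG_mor_def)
qed

lemma FG_mor_id: "FG_mor G id_morph = id_morph"
  by (simp add: FG_mor_def id_morph_def fun_eq_iff split: prod.splits)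

lemma FG_mor_comp: "FG_mor G (comp_morph \<beta> \<alpha>) = comp_morph (FG_mor G \<beta>) (FG_mor G \<alpha>)"
  by (simp add: FG_mor_def comp_morph_def fun_eq_iff split: prod.splits)

theorem theorem6:
  fixes G :: "('s, 'y, 'r) game"
    and H :: "('sh, 'yh, 'r) game" and H' :: "('sh2, 'yh2, 'r) game"
    and \<alpha> :: "('yh, 'sh, 'yh2, 'sh2) gmor"
    and \<alpha>1 :: "('a1, 'b1, 'a2, 'b2) gmor" and \<beta>1 :: "('a2, 'b2, 'a3, 'b3) gmor"
  shows "(is_morph H H' \<alpha> \<longrightarrow> is_morph (FG_obj G H) (FG_obj G H') (FG_mor G \<alpha>))
    \<and> FG_mor G (id_morph :: ('yh, 'sh, 'yh, 'sh) gmor) = id_morph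
    \<and> FG_mor G (comp_morph \<beta>1 \<alpha>1) = comp_morph (FG_mor G \<beta>1) (FG_mor G \<alpha>1)"
  using FG_mor_is_morph FG_mor_id FG_mor_comp by blast

end
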